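(* Let $k\geq 2$ be an integer and let $G$ be a properly edge-coloured graph on $n$ vertices. If $\hom(C_{2k},G)>64^{2k}k^{3k}n\Delta(G)^k$, then $G$ contains a rainbow cycle of length $2k$.
   Context: $\hom(C_{2k},G)$ is the number of graph homomorphisms from the cycle $C_{2k}$ to $G$, i.e. tuples $(x_1,\dots,x_{2k})$ of vertices with $x_ix_{i+1}\in E(G)$ for all $i$ (indices mod $2k$). $\Delta(G)$ is the maximum degree. An edge-colouring is proper if edges sharing a vertex get different colours; a subgraph is rainbow if all its edges have distinct colours. *)

theory Defs
  imports Complex_Main "HOL-Library.FuncSet"
begin

definition simple_graph :: "'a set \<Rightarrow> 'a set set \<Rightarrow> bool" where
  "simple_graph V E \<longleftrightarrow> finite V \<and> (\<forall>e\<in>E. e \<subseteq> V \<and> card e = 2)"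

definition degree :: "'a set set \<Rightarrow> 'a \<Rightarrow> nat" where
  "degree E v = card {e\<in>E. v \<in> e}"

definition max_degree :: "'a set \<Rightarrow> 'a set set \<Rightarrow> nat" where
  "max_degree V E = Max (insert 0 (degree E ` V))"

definition proper_edge_colouring :: "'a set set \<Rightarrow> ('a set \<Rightarrow> 'c) \<Rightarrow> bool" where
  "proper_edge_colouring E c \<longleftrightarrow>
     (\<forall>e\<in>E. \<forall>f\<in>E. e \<noteq> f \<and> e \<inter> f \<noteq> {} \<longrightarrow> c e \<noteq> c f)"

definition cycle_homs :: "nat \<Rightarrow> 'a set \<Rightarrow> 'a set set \<Rightarrow> (nat \<Rightarrow> 'a) set" where
  "cycle_homs m V E = {x \<in> {0..<m} \<rightarrow>\<^sub>E V. \<forall>i<m. {x i, x ((i + 1) mod m)} \<in> E}"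

definition hom_cycle :: "nat \<Rightarrow> 'a set \<Rightarrow> 'a set set \<Rightarrow> nat" where
  "hom_cycle m V E = card (cycle_homs m V E)"

definition is_cycle :: "'a set \<Rightarrow> 'a set set \<Rightarrow> nat \<Rightarrow> (nat \<Rightarrow> 'a) \<Rightarrow> bool" where
  "is_cycle V E m x \<longleftrightarrow> inj_on x {0..<m} \<and> (\<forall>i<m. x i \<in> V) \<and>
     (\<forall>i<m. {x i, x ((i + 1) mod m)} \<in> E)"

definition has_rainbow_cycle :: "'a set \<Rightarrow> 'a set set \<Rightarrow> ('a set \<Rightarrow> 'c) \<Rightarrow> nat \<Rightarrow> bool" where
  "has_rainbow_cycle V E c m \<longleftrightarrow> (\<exists>x. is_cycle V E m x \<and>
     inj_on (\<lambda>i. c {x i, x ((i + 1) mod m)}) {0..<m})"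

end

theory Submission
  imports Defs "HOL-Analysis.Convex"
begin

text \<open>
  Let \<open>M\<^sub>j\<close> be the number of closed walks of length \<open>2j\<close>, so that \<open>hom(C\<^sub>2\<^sub>k, G) = M\<^sub>k\<close> and
  \<open>M\<^sub>0 = n\<close>.  A homomorphism \<open>x\<close> that is not a rainbow cycle has two positions \<open>i, j\<close>, at
  cyclic distance at least 2, with \<open>x\<^sub>i = x\<^sub>j\<close> or with equally coloured edges \<open>x\<^sub>i x\<^sub>i\<^sub>+\<^sub>1\<close>,
  \<open>x\<^sub>j x\<^sub>j\<^sub>+\<^sub>1\<close> (adjacent positions are excluded because \<open>G\<close> is simple and the colouring proper).
  After a rotation, both kinds of collision are counted by trace forms \<open>T(a, b)\<close> with \<open>a + b\<close>
  fixed, and Cauchy--Schwarz makes \<open>T\<close> log-convex along \<open>a + b = const\<close>, so \<open>T\<close> is largest at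
  the ends; there, at most \<open>\<Delta>\<close> ways to continue (a repeated vertex two steps apart, or an edge
  followed by itself) bound it by \<open>\<Delta> M\<^sub>k\<^sub>-\<^sub>1\<close>.  Hence at most \<open>8k\<^sup>2 \<Delta> M\<^sub>k\<^sub>-\<^sub>1\<close> homomorphisms are
  degenerate.  Log-convexity of \<open>M\<^sub>j\<close> gives \<open>M\<^sub>k\<^sub>-\<^sub>1\<^sup>k \<le> n M\<^sub>k\<^sup>k\<^sup>-\<^sup>1\<close>, which together with the
  hypothesis yields \<open>4096 k\<^sup>3 \<Delta> M\<^sub>k\<^sub>-\<^sub>1 \<le> M\<^sub>k\<close>, leaving a rainbow \<open>C\<^sub>2\<^sub>k\<close>.
\<close>

lemma sum_swap_into2: "(\<Sum>s\<in>A. \<Sum>u\<in>B. \<Sum>b\<in>C. f s u b) = (\<Sum>u\<in>B. \<Sum>b\<in>C. \<Sum>s\<in>A. f s u b)"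
  by (subst sum.swap, rule sum.cong[OF refl], rule sum.swap)
lemma sum_swap_into3: "(\<Sum>s\<in>A. \<Sum>u\<in>B. \<Sum>b\<in>C. \<Sum>y\<in>D. f s u b y) = (\<Sum>u\<in>B. \<Sum>b\<in>C. \<Sum>y\<in>D. \<Sum>s\<in>A. f s u b y)"
  by (subst sum.swap, rule sum.cong[OF refl], rule sum_swap_into2)
lemma sum_swap_into4: "(\<Sum>s\<in>A. \<Sum>u\<in>B. \<Sum>b\<in>C. \<Sum>y\<in>D. \<Sum>z\<in>F. f s u b y z) = (\<Sum>u\<in>B. \<Sum>b\<in>C. \<Sum>y\<in>D. \<Sum>z\<in>F. \<Sum>s\<in>A. f s u b y z)"
  by (subst sum.swap, rule sum.cong[OF refl], rule sum_swap_into3)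
lemma sum2_swap_into4: "(\<Sum>s\<in>A. \<Sum>t\<in>A'. \<Sum>u\<in>B. \<Sum>b\<in>C. \<Sum>y\<in>D. \<Sum>z\<in>F. f s t u b y z) =
   (\<Sum>u\<in>B. \<Sum>b\<in>C. \<Sum>y\<in>D. \<Sum>z\<in>F. \<Sum>s\<in>A. \<Sum>t\<in>A'. f s t u b y z)"
  by (rule trans[OF sum.cong[OF refl sum_swap_into4] sum_swap_into4])

lemma Cauchy_Schwarz_ineq_sum3:
  fixes f g :: "'k \<Rightarrow> 'a \<Rightarrow> 'a \<Rightarrow> real"
  shows "(\<Sum>k\<in>K. \<Sum>s\<in>V. \<Sum>t\<in>V. f k s t * g k s t)\<^sup>2 \<le>
     (\<Sum>k\<in>K. \<Sum>s\<in>V. \<Sum>t\<in>V. (f k s t)\<^sup>2) * (\<Sum>k\<in>K. \<Sum>s\<in>V. \<Sum>t\<in>V. (g k s t)\<^sup>2)"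
proof -
  have e: "\<And>h :: 'k \<Rightarrow> 'a \<Rightarrow> 'a \<Rightarrow> real. (\<Sum>k\<in>K. \<Sum>s\<in>V. \<Sum>t\<in>V. h k s t) =
      (\<Sum>p\<in>K \<times> V \<times> V. h (fst p) (fst (snd p)) (snd (snd p)))"
    by (simp add: sum.cartesian_product split_def)
  show ?thesis unfolding e by (rule Cauchy_Schwarz_ineq_sum)
qed

text \<open>With matrices \<open>W\<^sub>a = Wf a\<close> and \<open>E\<^sub>k = e k\<close> indexed by \<open>V\<close> this is
  \<open>\<Sum>k\<in>K. tr (E\<^sub>k W\<^sub>a E\<^sub>k W\<^sub>b)\<close>.  With \<open>W\<^sub>a\<close> counting walks of length \<open>a\<close>, it counts closed walks
  of length \<open>a + b + 2\<close> whose first and \<open>(a + 2)\<close>-nd edge share a colour when \<open>E\<^sub>k\<close> is the adjacency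
  matrix of colour class \<open>k\<close>, and closed walks of length \<open>a + b\<close> returning to their start after \<open>a\<close>
  steps when \<open>E\<^sub>k\<close> is the indicator of the diagonal entry \<open>(k, k)\<close>.\<close>
definition trace_form :: "'a set \<Rightarrow> (nat \<Rightarrow> 'a \<Rightarrow> 'a \<Rightarrow> real) \<Rightarrow> 'k set \<Rightarrow> ('k \<Rightarrow> 'a \<Rightarrow> 'a \<Rightarrow> real)
   \<Rightarrow> nat \<Rightarrow> nat \<Rightarrow> real" where
  "trace_form V Wf K e a b = (\<Sum>k\<in>K. \<Sum>u\<in>V. \<Sum>\<beta>\<in>V. \<Sum>y\<in>V. \<Sum>y'\<in>V.
      e k u \<beta> * e k y y' * (Wf a \<beta> y * Wf b y' u))"

definition sandwich_entry :: "'a set \<Rightarrow> (nat \<Rightarrow> 'a \<Rightarrow> 'a \<Rightarrow> real) \<Rightarrow> ('k \<Rightarrow> 'a \<Rightarrow> 'a \<Rightarrow> real)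
   \<Rightarrow> nat \<Rightarrow> nat \<Rightarrow> 'k \<Rightarrow> 'a \<Rightarrow> 'a \<Rightarrow> real" where
  "sandwich_entry V Wf e a b k s t = (\<Sum>u\<in>V. \<Sum>\<beta>\<in>V. e k u \<beta> * Wf a \<beta> s * Wf b t u)"

lemma scaled_sum_product: "(c::real) * ((\<Sum>s\<in>A. P s) * (\<Sum>t\<in>B. Q t)) = (\<Sum>s\<in>A. \<Sum>t\<in>B. c * (P s * Q t))"
  unfolding sum_product by (simp add: sum_distrib_left)

lemma trace_form_nonneg:
  assumes "\<And>k x y. e k x y \<ge> 0" "\<And>a x y. Wf a x y \<ge> 0"
  shows "trace_form V Wf K e a b \<ge> 0"
  unfolding trace_form_def using assms by (intro sum_nonneg mult_nonneg_nonneg) auto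

lemma trace_form_commute:
  fixes Wf :: "nat \<Rightarrow> 'a \<Rightarrow> 'a \<Rightarrow> real" and e :: "'k \<Rightarrow> 'a \<Rightarrow> 'a \<Rightarrow> real"
  assumes esym: "\<And>k x y. e k x y = e k y x"
    and Wsym: "\<And>a x y. Wf a x y = Wf a y x"
  shows "trace_form V Wf K e a b = trace_form V Wf K e b a"
proof -
  have leaf: "e k u \<beta> * e k y y' * (Wf a \<beta> y * Wf b y' u) = e k \<beta> u * e k y' y * (Wf b u y' * Wf a y \<beta>)"
    for k u \<beta> y y'
    using esym[of k u \<beta>] esym[of k y y'] Wsym[of a \<beta> y] Wsym[of b y' u] by (simp add: mult_ac)
  have "trace_form V Wf K e a b = (\<Sum>k\<in>K. \<Sum>u\<in>V. \<Sum>\<beta>\<in>V. \<Sum>y\<in>V. \<Sum>y'\<in>V.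
      e k \<beta> u * e k y' y * (Wf b u y' * Wf a y \<beta>))"
    unfolding trace_form_def by (intro sum.cong refl leaf)
  also have "\<dots> = (\<Sum>k\<in>K. \<Sum>\<beta>\<in>V. \<Sum>u\<in>V. \<Sum>y\<in>V. \<Sum>y'\<in>V.
      e k \<beta> u * e k y' y * (Wf b u y' * Wf a y \<beta>))"
    by (rule sum.cong[OF refl], rule sum.swap)
  also have "\<dots> = (\<Sum>k\<in>K. \<Sum>\<beta>\<in>V. \<Sum>u\<in>V. \<Sum>y'\<in>V. \<Sum>y\<in>V.
      e k \<beta> u * e k y' y * (Wf b u y' * Wf a y \<beta>))"
    by (rule sum.cong[OF refl], rule sum.cong[OF refl], rule sum.cong[OF refl], rule sum.swap)
  also have "\<dots> = trace_form V Wf K e b a" unfolding trace_form_def ..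
  finally show ?thesis .
qed

lemma trace_form_add_eq_sum_sandwich:
  fixes Wf :: "nat \<Rightarrow> 'a \<Rightarrow> 'a \<Rightarrow> real" and e :: "'k \<Rightarrow> 'a \<Rightarrow> 'a \<Rightarrow> real"
  assumes Wadd: "\<And>a b x y. Wf (a+b) x y = (\<Sum>w\<in>V. Wf a x w * Wf b w y)"
  shows "trace_form V Wf K e (a1+a2) (b1+b2) = (\<Sum>k\<in>K. \<Sum>s\<in>V. \<Sum>t\<in>V.
    sandwich_entry V Wf e a1 b2 k s t * sandwich_entry V Wf e b1 a2 k t s)"
proof -
  have "trace_form V Wf K e (a1+a2) (b1+b2) = (\<Sum>k\<in>K. \<Sum>u\<in>V. \<Sum>\<beta>\<in>V. \<Sum>y\<in>V. \<Sum>y'\<in>V. \<Sum>s\<in>V. \<Sum>t\<in>V.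
      e k u \<beta> * e k y y' * ((Wf a1 \<beta> s * Wf a2 s y) * (Wf b1 y' t * Wf b2 t u)))"
    unfolding trace_form_def Wadd scaled_sum_product by simp
  also have "\<dots> = (\<Sum>k\<in>K. \<Sum>s\<in>V. \<Sum>t\<in>V. \<Sum>u\<in>V. \<Sum>\<beta>\<in>V. \<Sum>y\<in>V. \<Sum>y'\<in>V.
      e k u \<beta> * e k y y' * ((Wf a1 \<beta> s * Wf a2 s y) * (Wf b1 y' t * Wf b2 t u)))"
    by (rule sum.cong[OF refl], rule sum2_swap_into4[symmetric])
  also have "\<dots> = (\<Sum>k\<in>K. \<Sum>s\<in>V. \<Sum>t\<in>V. \<Sum>u\<in>V. \<Sum>y\<in>V. \<Sum>\<beta>\<in>V. \<Sum>y'\<in>V.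
      e k u \<beta> * e k y y' * ((Wf a1 \<beta> s * Wf a2 s y) * (Wf b1 y' t * Wf b2 t u)))"
    by (rule sum.cong[OF refl], rule sum.cong[OF refl], rule sum.cong[OF refl], rule sum.cong[OF refl], rule sum.swap)
  also have "\<dots> = (\<Sum>k\<in>K. \<Sum>s\<in>V. \<Sum>t\<in>V.
      sandwich_entry V Wf e a1 b2 k s t * sandwich_entry V Wf e b1 a2 k t s)"
    unfolding sandwich_entry_def sum_product by (intro sum.cong refl) (simp add: mult_ac)
  finally show ?thesis .
qed

lemma sum_sandwich_entry_square:
  fixes Wf :: "nat \<Rightarrow> 'a \<Rightarrow> 'a \<Rightarrow> real" and e :: "'k \<Rightarrow> 'a \<Rightarrow> 'a \<Rightarrow> real"
  assumes esym: "\<And>k x y. e k x y = e k y x"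
    and Wsym: "\<And>a x y. Wf a x y = Wf a y x"
    and Wadd: "\<And>a b x y. Wf (a+b) x y = (\<Sum>w\<in>V. Wf a x w * Wf b w y)"
  shows "(\<Sum>k\<in>K. \<Sum>s\<in>V. \<Sum>t\<in>V. (sandwich_entry V Wf e a b k s t)\<^sup>2) = trace_form V Wf K e (2*a) (2*b)"
proof -
  have W2: "Wf (2*a) x y = (\<Sum>w\<in>V. Wf a w x * Wf a w y)" for a x y
    using Wadd[of a a] by (simp add: mult_2 Wsym[of a x])
  have W2': "Wf (2*a) x y = (\<Sum>w\<in>V. Wf a x w * Wf a y w)" for a x y
    using Wadd[of a a] by (simp add: mult_2 Wsym[of a _ y])
  have leaf: "e k u \<beta> * e k u' \<beta>' * (Wf (2*a) \<beta> \<beta>' * Wf (2*b) u u') =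
      e k u \<beta> * e k \<beta>' u' * (Wf (2*a) \<beta> \<beta>' * Wf (2*b) u' u)" for k u \<beta> u' \<beta>'
    using esym[of k u' \<beta>'] Wsym[of "2*b" u u'] by simp
  have "(\<Sum>k\<in>K. \<Sum>s\<in>V. \<Sum>t\<in>V. (sandwich_entry V Wf e a b k s t)\<^sup>2) = (\<Sum>k\<in>K. \<Sum>s\<in>V. \<Sum>t\<in>V.
     \<Sum>u\<in>V. \<Sum>u'\<in>V. \<Sum>\<beta>\<in>V. \<Sum>\<beta>'\<in>V. e k u \<beta> * e k u' \<beta>' * ((Wf a \<beta> s * Wf a \<beta>' s) * (Wf b t u * Wf b t u')))"
    unfolding sandwich_entry_def power2_eq_square sum_product
    by (intro sum.cong refl) (simp add: mult_ac)
  also have "\<dots> = (\<Sum>k\<in>K. \<Sum>u\<in>V. \<Sum>u'\<in>V. \<Sum>\<beta>\<in>V. \<Sum>\<beta>'\<in>V. \<Sum>s\<in>V. \<Sum>t\<in>V.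
      e k u \<beta> * e k u' \<beta>' * ((Wf a \<beta> s * Wf a \<beta>' s) * (Wf b t u * Wf b t u')))"
    by (rule sum.cong[OF refl], rule sum2_swap_into4)
  also have "\<dots> = (\<Sum>k\<in>K. \<Sum>u\<in>V. \<Sum>u'\<in>V. \<Sum>\<beta>\<in>V. \<Sum>\<beta>'\<in>V.
      e k u \<beta> * e k u' \<beta>' * (Wf (2*a) \<beta> \<beta>' * Wf (2*b) u u'))"
    unfolding W2'[of a] W2[of b] scaled_sum_product by simp
  also have "\<dots> = (\<Sum>k\<in>K. \<Sum>u\<in>V. \<Sum>\<beta>\<in>V. \<Sum>\<beta>'\<in>V. \<Sum>u'\<in>V.
      e k u \<beta> * e k u' \<beta>' * (Wf (2*a) \<beta> \<beta>' * Wf (2*b) u u'))"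
    by (rule sum.cong[OF refl], rule sum.cong[OF refl], rule sum_swap_into2)
  also have "\<dots> = trace_form V Wf K e (2*a) (2*b)"
    unfolding trace_form_def by (intro sum.cong refl leaf)
  finally show ?thesis .
qed

lemma trace_form_Cauchy_Schwarz:
  fixes Wf :: "nat \<Rightarrow> 'a \<Rightarrow> 'a \<Rightarrow> real" and e :: "'k \<Rightarrow> 'a \<Rightarrow> 'a \<Rightarrow> real"
  assumes esym: "\<And>k x y. e k x y = e k y x"
    and Wsym: "\<And>a x y. Wf a x y = Wf a y x"
    and Wadd: "\<And>a b x y. Wf (a+b) x y = (\<Sum>w\<in>V. Wf a x w * Wf b w y)"
  shows "(trace_form V Wf K e (a1+a2) (b1+b2))\<^sup>2 \<le> trace_form V Wf K e (2*a1) (2*b2) * trace_form V Wf K e (2*a2) (2*b1)"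
proof -
  let ?S = "sandwich_entry V Wf e"
  have X: "(\<Sum>k\<in>K. \<Sum>s\<in>V. \<Sum>t\<in>V. (?S a1 b2 k s t)\<^sup>2) = trace_form V Wf K e (2*a1) (2*b2)"
    by (rule sum_sandwich_entry_square[where e=e and Wf=Wf, OF esym Wsym Wadd])
  have "(\<Sum>k\<in>K. \<Sum>s\<in>V. \<Sum>t\<in>V. (?S b1 a2 k t s)\<^sup>2) = (\<Sum>k\<in>K. \<Sum>s\<in>V. \<Sum>t\<in>V. (?S b1 a2 k s t)\<^sup>2)"
    by (intro sum.cong refl sum.swap)
  also have "\<dots> = trace_form V Wf K e (2*a2) (2*b1)"
    using sum_sandwich_entry_square[where e=e and Wf=Wf, OF esym Wsym Wadd]
      trace_form_commute[where e=e and Wf=Wf, OF esym Wsym] by simp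
  finally have Y: "(\<Sum>k\<in>K. \<Sum>s\<in>V. \<Sum>t\<in>V. (?S b1 a2 k t s)\<^sup>2) = trace_form V Wf K e (2*a2) (2*b1)" .
  have "(trace_form V Wf K e (a1+a2) (b1+b2))\<^sup>2 =
      (\<Sum>k\<in>K. \<Sum>s\<in>V. \<Sum>t\<in>V. ?S a1 b2 k s t * ?S b1 a2 k t s)\<^sup>2"
    by (simp add: trace_form_add_eq_sum_sandwich[where e=e and Wf=Wf, OF Wadd])
  also have "\<dots> \<le> (\<Sum>k\<in>K. \<Sum>s\<in>V. \<Sum>t\<in>V. (?S a1 b2 k s t)\<^sup>2) *
      (\<Sum>k\<in>K. \<Sum>s\<in>V. \<Sum>t\<in>V. (?S b1 a2 k t s)\<^sup>2)"
    by (rule Cauchy_Schwarz_ineq_sum3)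
  finally show ?thesis unfolding X Y .
qed

lemma log_convex_antidiagonal_max:
  fixes T :: "nat \<Rightarrow> nat \<Rightarrow> real"
  assumes nonneg: "\<And>a b. T a b \<ge> 0"
    and cs: "\<And>a1 a2 b1 b2. (T (a1+a2) (b1+b2))\<^sup>2 \<le> T (2*a1) (2*b2) * T (2*a2) (2*b1)"
    and sym: "\<And>a b. T a b = T b a"
    and rs: "2*r \<le> s"
    and d: "2*r \<le> d" "d \<le> 2*s - 2*r"
  shows "T d (2*s - d) \<le> T (2*r) (2*s - 2*r)"
proof -
  define S where "S = {2*r..2*s-2*r}"
  define f where "f x = T x (2*s - x)" for x
  define B where "B = T (2*r) (2*s - 2*r)"
  define M where "M = Max (f ` S)"
  have finS: "finite (f ` S)" by (simp add: S_def)
  have neS: "f ` S \<noteq> {}" using rs by (auto simp: S_def)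
  have fM: "x \<in> S \<Longrightarrow> f x \<le> M" for x unfolding M_def using finS by auto
  obtain d1 where d1: "d1 \<in> S" "f d1 = M" unfolding M_def using Max_in[OF finS neS] by auto
  have flip: "f (2*s - d1) = f d1" using d1 by (auto simp: S_def f_def sym intro: arg_cong2[where f=T])
  obtain d0 where d0: "d0 \<in> S" "f d0 = M" "d0 \<le> s"
  proof (cases "d1 \<le> s")
    case False
    with d1 flip show ?thesis by (intro that[of "2*s - d1"]) (auto simp: S_def)
  qed (use d1 in blast)
  have B0: "B \<ge> 0" using nonneg by (simp add: B_def)
  text \<open>The maximiser \<open>d0\<close> of \<open>f\<close> is a midpoint of \<open>2r\<close> and \<open>2(d0 - r)\<close>.\<close>
  have "M\<^sup>2 = (T (r + (d0 - r)) ((s - d0 + r) + (s - r)))\<^sup>2"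
    using d0 rs by (auto simp: f_def S_def intro!: arg_cong[where f="\<lambda>x. x\<^sup>2"] arg_cong2[where f=T])
  also have "\<dots> \<le> T (2*r) (2*(s-r)) * T (2*(d0-r)) (2*(s - d0 + r))" by (rule cs)
  also have "\<dots> = B * f (2*(d0-r))"
    using d0 rs by (auto simp: f_def S_def B_def right_diff_distrib' intro!: arg_cong[where f="T _"])
  also have "\<dots> \<le> B * M" using d0 rs by (intro mult_left_mono fM B0) (auto simp: S_def)
  finally have "M\<^sup>2 \<le> B * M" .
  moreover have "M \<ge> 0" using d0 nonneg by (auto simp: f_def)
  ultimately have "M \<le> B" using B0 by (cases "M = 0") (auto simp: power2_eq_square)
  moreover have "f d \<le> M" using d by (intro fM) (auto simp: S_def)
  ultimately show ?thesis by (simp add: f_def B_def)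
qed

lemma log_convex_power_interpolation:
  fixes M :: "nat \<Rightarrow> real"
  assumes nonneg: "\<And>j. M j \<ge> 0" and M0: "M 0 \<le> n"
    and lc: "\<And>j. (M (Suc j))\<^sup>2 \<le> M j * M (Suc (Suc j))"
  shows "M j ^ (j+1) \<le> n * M (j+1) ^ j"
proof (induction j)
  case 0 thus ?case using M0 by simp
next
  case (Suc j)
  let ?a = "M j" and ?b = "M (Suc j)" and ?c = "M (Suc (Suc j))"
  have close_walk: "j + (j+2) = 2*(j+1)" by simp
  have "?b ^ j * ?b ^ (j+2) = (?b\<^sup>2) ^ (j+1)" unfolding power_add[symmetric] close_walk power_mult ..
  also have "\<dots> \<le> (?a * ?c) ^ (j+1)" by (rule power_mono[OF lc]) (simp add: nonneg)
  also have "\<dots> = ?a ^ (j+1) * ?c ^ (j+1)" by (simp add: power_mult_distrib)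
  also have "\<dots> \<le> (n * ?b ^ j) * ?c ^ (j+1)"
    using Suc.IH by (intro mult_right_mono) (auto simp: nonneg)
  finally have *: "?b ^ j * ?b ^ (j+2) \<le> ?b ^ j * (n * ?c ^ (j+1))" by (simp add: mult_ac)
  show ?case
  proof (cases "?b = 0")
    case True
    have "n \<ge> 0" using M0 nonneg[of 0] by simp
    thus ?thesis using True nonneg by simp
  next
    case False
    hence "?b ^ j > 0" using nonneg[of "Suc j"] by simp
    hence "?b ^ (j+2) \<le> n * ?c ^ (j+1)" using * by (simp add: mult_le_cancel_left_pos)
    thus ?thesis by simp
  qed
qed

lemma mult_le_from_power_bounds:
  fixes L D A B n :: real and k :: nat
  assumes "k \<ge> 1" "L > 0" "D \<ge> 0" "A \<ge> 0" "B \<ge> 0" "n \<ge> 0"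
    and h1: "A ^ k \<le> n * B ^ (k-1)"
    and h2: "B > L ^ k * n * D ^ k"
  shows "L * D * A \<le> B"
proof (rule ccontr)
  assume "\<not> L * D * A \<le> B"
  hence lt: "B < L * D * A" by simp
  obtain k' where k: "k = Suc k'" using assms(1) by (cases k) auto
  have "L ^ k * n * D ^ k \<ge> 0" using assms by simp
  hence B0: "B > 0" using h2 by linarith
  have "B ^ k < (L * D * A) ^ k" using lt B0 assms k by (intro power_strict_mono) auto
  also have "\<dots> = (L*D) ^ k * A ^ k" by (simp add: power_mult_distrib)
  also have "\<dots> \<le> (L*D) ^ k * (n * B ^ (k-1))" using h1 assms by (intro mult_left_mono) auto
  finally have "B * B ^ k' < (L^k * n * D^k) * B ^ k'"
    unfolding k by (simp add: power_mult_distrib mult_ac)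
  hence "B < L^k * n * D^k" using B0 by (simp add: mult_less_cancel_right)
  thus False using h2 by simp
qed


definition walk_prefix :: "nat \<Rightarrow> (nat \<Rightarrow> 'a) \<Rightarrow> (nat \<Rightarrow> 'a)" where "walk_prefix a z = restrict z {0..a}"
definition walk_suffix :: "nat \<Rightarrow> nat \<Rightarrow> (nat \<Rightarrow> 'a) \<Rightarrow> (nat \<Rightarrow> 'a)" where
  "walk_suffix a b z = restrict (\<lambda>i. z (a+i)) {0..b}"
definition walk_append :: "nat \<Rightarrow> nat \<Rightarrow> (nat \<Rightarrow> 'a) \<Rightarrow> (nat \<Rightarrow> 'a) \<Rightarrow> (nat \<Rightarrow> 'a)" where
  "walk_append a b x y = restrict (\<lambda>i. if i \<le> a then x i else y (i - a)) {0..a+b}"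

lemma card_eq_sum_card_fibres:
  assumes "finite A" "finite T" "f ` A \<subseteq> T"
  shows "card A = (\<Sum>t\<in>T. card {a\<in>A. f a = t})"
proof -
  have "A = (\<Union>t\<in>T. {a\<in>A. f a = t})" using assms(3) by auto
  hence "card A = card (\<Union>t\<in>T. {a\<in>A. f a = t})" by simp
  also have "\<dots> = (\<Sum>t\<in>T. card {a\<in>A. f a = t})"
    by (rule card_UN_disjoint) (use assms in auto)
  finally show ?thesis .
qed

lemma not_inj_on_atLeastLessThanE:
  fixes m :: nat
  assumes "\<not> inj_on f {0..<m}"
  obtains a b where "a < b" "b < m" "f a = f b"
proof -
  from assms obtain i j where "i < m" "j < m" "i \<noteq> j" "f i = f j"
    unfolding inj_on_def by auto
  then show thesis
    using that[of i j] that[of j i] by (cases i j rule: linorder_cases) auto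
qed

locale finite_simple_graph =
  fixes V :: "'a set" and E :: "'a set set"
  assumes graph: "simple_graph V E"
begin

lemma finite_V: "finite V" using graph by (simp add: simple_graph_def)
lemma edge_subset: "e \<in> E \<Longrightarrow> e \<subseteq> V" using graph by (simp add: simple_graph_def)
lemma edge_card: "e \<in> E \<Longrightarrow> card e = 2" using graph by (simp add: simple_graph_def)
lemma edge_distinct: "{x,y} \<in> E \<Longrightarrow> x \<noteq> y" using edge_card by fastforce
lemma edge_vertices: "{x,y} \<in> E \<Longrightarrow> x \<in> V \<and> y \<in> V" using edge_subset by blast

lemma finite_E: "finite E"
proof -
  have "E \<subseteq> Pow V" using edge_subset by auto
  thus ?thesis using finite_V by (simp add: finite_subset)
qed

definition walks :: "nat \<Rightarrow> (nat \<Rightarrow> 'a) set" where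
  "walks a = {z \<in> {0..a} \<rightarrow>\<^sub>E V. \<forall>i<a. {z i, z (Suc i)} \<in> E}"
definition walks_from_to :: "nat \<Rightarrow> 'a \<Rightarrow> 'a \<Rightarrow> (nat \<Rightarrow> 'a) set" where
  "walks_from_to a u v = {z \<in> walks a. z 0 = u \<and> z a = v}"
definition num_walks :: "nat \<Rightarrow> 'a \<Rightarrow> 'a \<Rightarrow> nat" where "num_walks a u v = card (walks_from_to a u v)"

lemma finite_walks: "finite (walks a)"
proof -
  have "finite ({0..a} \<rightarrow>\<^sub>E V)" using finite_V by (simp add: finite_PiE)
  thus ?thesis unfolding walks_def by simp
qed

lemma finite_walks_from_to: "finite {z \<in> walks_from_to a u v. P z}"
  using finite_walks unfolding walks_from_to_def by simp

lemma walk_prefix_walks: "z \<in> walks (a+b) \<Longrightarrow> walk_prefix a z \<in> walks a"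
  unfolding walks_def walk_prefix_def by (auto simp: PiE_iff)

lemma walk_suffix_walks: "z \<in> walks (a+b) \<Longrightarrow> walk_suffix a b z \<in> walks b"
  unfolding walks_def walk_suffix_def by (auto simp: PiE_iff)

lemma walk_append_walks: assumes "x \<in> walks a" "y \<in> walks b" "x a = y 0"
  shows "walk_append a b x y \<in> walks (a+b)"
proof -
  have "walk_append a b x y \<in> {0..a+b} \<rightarrow>\<^sub>E V"
    using assms unfolding walks_def walk_append_def by (auto simp: PiE_iff)
  moreover have "{walk_append a b x y i, walk_append a b x y (Suc i)} \<in> E" if "i < a+b" for i
  proof (cases "i < a")
    case True
    thus ?thesis using assms that unfolding walks_def walk_append_def by auto
  next
    case False
    hence "Suc i - a = Suc (i - a)" by simp
    moreover have "i - a < b" using that False by simp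
    ultimately show ?thesis using assms that False unfolding walks_def walk_append_def
      by (cases "i = a") auto
  qed
  ultimately show ?thesis unfolding walks_def by auto
qed

lemma walk_append_prefix_suffix: "z \<in> {0..a+b} \<rightarrow>\<^sub>E V \<Longrightarrow> walk_append a b (walk_prefix a z) (walk_suffix a b z) = z"
  unfolding walk_append_def walk_prefix_def walk_suffix_def by (rule ext) (auto simp: PiE_iff extensional_def)

lemma walk_prefix_append: "x \<in> {0..a} \<rightarrow>\<^sub>E V \<Longrightarrow> walk_prefix a (walk_append a b x y) = x"
  unfolding walk_append_def walk_prefix_def by (rule ext) (auto simp: PiE_iff extensional_def)

lemma walk_suffix_append: "y \<in> {0..b} \<rightarrow>\<^sub>E V \<Longrightarrow> x a = y 0 \<Longrightarrow> walk_suffix a b (walk_append a b x y) = y"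
  unfolding walk_append_def walk_suffix_def by (rule ext) (auto simp: PiE_iff extensional_def)

lemma walks_split_bij:
  "bij_betw (\<lambda>z. (walk_prefix a z, walk_suffix a b z)) {z \<in> walks_from_to (a+b) u v. z a = w \<and> P (walk_prefix a z) \<and> Q (walk_suffix a b z)}
     ({x \<in> walks_from_to a u w. P x} \<times> {y \<in> walks_from_to b w v. Q y})"
proof (rule bij_betw_byWitness[where f' = "\<lambda>(x,y). walk_append a b x y"])
  show "\<forall>z\<in>{z \<in> walks_from_to (a+b) u v. z a = w \<and> P (walk_prefix a z) \<and> Q (walk_suffix a b z)}.
      (\<lambda>(x,y). walk_append a b x y) (walk_prefix a z, walk_suffix a b z) = z"
    using walk_append_prefix_suffix unfolding walks_from_to_def walks_def by auto
  show "\<forall>p\<in>{x \<in> walks_from_to a u w. P x} \<times> {y \<in> walks_from_to b w v. Q y}.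
      (\<lambda>z. (walk_prefix a z, walk_suffix a b z)) ((\<lambda>(x,y). walk_append a b x y) p) = p"
    using walk_prefix_append walk_suffix_append unfolding walks_from_to_def walks_def by auto
  show "(\<lambda>z. (walk_prefix a z, walk_suffix a b z)) ` {z \<in> walks_from_to (a+b) u v. z a = w \<and> P (walk_prefix a z) \<and> Q (walk_suffix a b z)}
      \<subseteq> {x \<in> walks_from_to a u w. P x} \<times> {y \<in> walks_from_to b w v. Q y}"
    using walk_prefix_walks walk_suffix_walks unfolding walks_from_to_def by (auto simp: walk_prefix_def walk_suffix_def)
  show "(\<lambda>(x,y). walk_append a b x y) ` ({x \<in> walks_from_to a u w. P x} \<times> {y \<in> walks_from_to b w v. Q y})
      \<subseteq> {z \<in> walks_from_to (a+b) u v. z a = w \<and> P (walk_prefix a z) \<and> Q (walk_suffix a b z)}"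
  proof (rule image_subsetI)
    fix p assume "p \<in> {x \<in> walks_from_to a u w. P x} \<times> {y \<in> walks_from_to b w v. Q y}"
    then obtain x y where p: "p = (x,y)" and x: "x \<in> walks_from_to a u w" "P x" and y: "y \<in> walks_from_to b w v" "Q y"
      by auto
    have xw: "x \<in> walks a" "x 0 = u" "x a = w" using x unfolding walks_from_to_def by auto
    have yw: "y \<in> walks b" "y 0 = w" "y b = v" using y unfolding walks_from_to_def by auto
    have xe: "x \<in> {0..a} \<rightarrow>\<^sub>E V" and ye: "y \<in> {0..b} \<rightarrow>\<^sub>E V"
      using xw yw unfolding walks_def by auto
    have g: "walk_append a b x y \<in> walks (a+b)" using walk_append_walks xw yw by simp
    have "walk_append a b x y 0 = u" using xw by (simp add: walk_append_def)
    moreover have "walk_append a b x y (a+b) = v" using xw yw by (auto simp: walk_append_def)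
    moreover have "walk_append a b x y a = w" using xw by (simp add: walk_append_def)
    ultimately show "(\<lambda>(x,y). walk_append a b x y) p \<in> {z \<in> walks_from_to (a+b) u v. z a = w \<and> P (walk_prefix a z) \<and> Q (walk_suffix a b z)}"
      using p g x(2) y(2) walk_prefix_append[OF xe] walk_suffix_append[OF ye] xw yw unfolding walks_from_to_def by simp
  qed
qed

lemma card_walks_split:
  "card {z \<in> walks_from_to (a+b) u v. z a = w \<and> P (walk_prefix a z) \<and> Q (walk_suffix a b z)}
     = card {x \<in> walks_from_to a u w. P x} * card {y \<in> walks_from_to b w v. Q y}"
  using bij_betw_same_card[OF walks_split_bij] by (simp add: card_cartesian_product)

lemma num_walks_add: "num_walks (a+b) u v = (\<Sum>w\<in>V. num_walks a u w * num_walks b w v)"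
proof -
  have "num_walks (a+b) u v = (\<Sum>w\<in>V. card {z \<in> walks_from_to (a+b) u v. z a = w})"
    unfolding num_walks_def
    by (rule card_eq_sum_card_fibres) (use finite_walks_from_to[where P="\<lambda>_. True"] finite_V in \<open>auto simp: walks_from_to_def walks_def\<close>)
  also have "\<dots> = (\<Sum>w\<in>V. num_walks a u w * num_walks b w v)"
  proof (rule sum.cong[OF refl])
    fix w
    show "card {z \<in> walks_from_to (a+b) u v. z a = w} = num_walks a u w * num_walks b w v"
      using card_walks_split[of a b u v w "\<lambda>_. True" "\<lambda>_. True"] by (simp add: num_walks_def)
  qed
  finally show ?thesis .
qed

lemma walks_from_to_PiE: "z \<in> walks_from_to a u v \<Longrightarrow> z \<in> {0..a} \<rightarrow>\<^sub>E V"
  unfolding walks_from_to_def walks_def by auto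

lemma num_walks_0: assumes "u \<in> V" shows "num_walks 0 u v = (if u = v then 1 else 0)"
proof (cases "u = v")
  case True
  have "walks_from_to 0 u v = {restrict (\<lambda>_. u) {0..0}}"
  proof
    show "walks_from_to 0 u v \<subseteq> {restrict (\<lambda>_. u) {0..0}}"
    proof
      fix z assume z: "z \<in> walks_from_to 0 u v"
      have "z = restrict (\<lambda>_. u) {0..0}"
        by (rule PiE_ext[OF walks_from_to_PiE[OF z]]) (use z assms in \<open>auto simp: walks_from_to_def\<close>)
      thus "z \<in> {restrict (\<lambda>_. u) {0..0}}" by simp
    qed
    show "{restrict (\<lambda>_. u) {0..0}} \<subseteq> walks_from_to 0 u v"
      using assms True by (auto simp: walks_from_to_def walks_def)
  qed
  thus ?thesis using True by (simp add: num_walks_def)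
next
  case False
  hence "walks_from_to 0 u v = {}" by (auto simp: walks_from_to_def)
  thus ?thesis using False by (simp add: num_walks_def)
qed

lemma num_walks_1: assumes "u \<in> V" "v \<in> V" shows "num_walks 1 u v = (if {u,v} \<in> E then 1 else 0)"
proof (cases "{u,v} \<in> E")
  case True
  let ?f = "restrict (\<lambda>i. if i = 0 then u else v) {0..1}"
  have "walks_from_to 1 u v = {?f}"
  proof
    show "walks_from_to 1 u v \<subseteq> {?f}"
    proof
      fix z assume z: "z \<in> walks_from_to 1 u v"
      have "\<forall>i\<in>{0..1}. z i = ?f i"
      proof
        fix i :: nat assume "i \<in> {0..1}"
        hence "i = 0 \<or> i = 1" by auto
        thus "z i = ?f i" using z by (auto simp: walks_from_to_def)
      qed
      hence "z = ?f" using PiE_ext[OF walks_from_to_PiE[OF z], of ?f] assms by auto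
      thus "z \<in> {?f}" by simp
    qed
    show "{?f} \<subseteq> walks_from_to 1 u v"
      using assms True by (auto simp: walks_from_to_def walks_def)
  qed
  thus ?thesis using True by (simp add: num_walks_def)
next
  case False
  hence "walks_from_to 1 u v = {}" by (auto simp: walks_from_to_def walks_def)
  thus ?thesis using False by (simp add: num_walks_def)
qed

definition walk_reverse :: "nat \<Rightarrow> (nat \<Rightarrow> 'a) \<Rightarrow> (nat \<Rightarrow> 'a)" where
  "walk_reverse a z = restrict (\<lambda>i. z (a - i)) {0..a}"

lemma walk_reverse_walks: assumes "z \<in> walks_from_to a u v" shows "walk_reverse a z \<in> walks_from_to a v u"
proof -
  have z: "z \<in> {0..a} \<rightarrow>\<^sub>E V" "\<forall>i<a. {z i, z (Suc i)} \<in> E" "z 0 = u" "z a = v"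
    using assms by (auto simp: walks_from_to_def walks_def)
  have "{walk_reverse a z i, walk_reverse a z (Suc i)} \<in> E" if "i < a" for i
  proof -
    have "a - i = Suc (a - Suc i)" using that by simp
    hence "{walk_reverse a z i, walk_reverse a z (Suc i)} = {z (Suc (a - Suc i)), z (a - Suc i)}"
      using that by (simp add: walk_reverse_def)
    also have "\<dots> \<in> E" using z(2) that by (simp add: insert_commute)
    finally show ?thesis .
  qed
  thus ?thesis using z by (auto simp: walks_from_to_def walks_def walk_reverse_def PiE_iff)
qed

lemma walk_reverse_reverse: "z \<in> {0..a} \<rightarrow>\<^sub>E V \<Longrightarrow> walk_reverse a (walk_reverse a z) = z"
  unfolding walk_reverse_def by (rule ext) (auto simp: PiE_iff extensional_def)

lemma num_walks_sym: "num_walks a u v = num_walks a v u"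
proof -
  have "bij_betw (walk_reverse a) (walks_from_to a u v) (walks_from_to a v u)"
    by (rule bij_betw_byWitness[where f'="walk_reverse a"]) (auto simp: walk_reverse_walks walk_reverse_reverse walks_from_to_PiE)
  thus ?thesis unfolding num_walks_def by (rule bij_betw_same_card)
qed

lemma degree_eq_card_neighbours: assumes "u \<in> V" shows "degree E u = card {w\<in>V. {u,w} \<in> E}"
proof -
  have "bij_betw (\<lambda>w. {u,w}) {w\<in>V. {u,w} \<in> E} {e\<in>E. u \<in> e}"
  proof (rule bij_betwI')
    fix x y assume "x \<in> {w\<in>V. {u,w} \<in> E}" "y \<in> {w\<in>V. {u,w} \<in> E}"
    thus "({u,x} = {u,y}) = (x = y)" using edge_distinct by (auto simp: doubleton_eq_iff)
  next
    fix x assume "x \<in> {w\<in>V. {u,w} \<in> E}" thus "{u,x} \<in> {e\<in>E. u \<in> e}" by auto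
  next
    fix e assume e: "e \<in> {e\<in>E. u \<in> e}"
    have "card e = 2" using e edge_card by auto
    then obtain x y where xy: "e = {x,y}" "x \<noteq> y" by (auto simp: card_2_iff)
    show "\<exists>w\<in>{w\<in>V. {u,w} \<in> E}. e = {u,w}"
    proof (cases "u = x")
      case True thus ?thesis using e xy edge_vertices by auto
    next
      case False hence "u = y" using e xy by auto
      thus ?thesis using e xy edge_vertices by (auto simp: insert_commute)
    qed
  qed
  then show ?thesis unfolding degree_def by (simp add: bij_betw_same_card)
qed

lemma degree_eq_sum:
  assumes "u \<in> V" shows "degree E u = (\<Sum>w\<in>V. if {u,w} \<in> E then 1 else 0)"
  using finite_V by (simp add: degree_eq_card_neighbours[OF assms] sum.If_cases Int_def)

lemma num_walks_2: assumes "u \<in> V" shows "num_walks 2 u u = degree E u"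
proof -
  have "num_walks 2 u u = (\<Sum>w\<in>V. num_walks 1 u w * num_walks 1 w u)"
    using num_walks_add[of 1 1] by (simp add: numeral_2_eq_2)
  also have "\<dots> = (\<Sum>w\<in>V. if {u,w} \<in> E then 1 else 0)"
    using num_walks_1 assms by (intro sum.cong refl) (simp add: insert_commute)
  finally show ?thesis by (simp add: degree_eq_sum[OF assms])
qed

definition close_walk :: "nat \<Rightarrow> (nat \<Rightarrow> 'a) \<Rightarrow> (nat \<Rightarrow> 'a)" where
  "close_walk m x = restrict (\<lambda>i. if i = m then x 0 else x i) {0..m}"

lemma cycle_homs_closed_walks_bij: assumes "m \<ge> 1"
  shows "bij_betw (close_walk m) {x \<in> cycle_homs m V E. P x}
           {z \<in> walks m. z m = z 0 \<and> P (restrict z {0..<m})}"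
proof (rule bij_betw_byWitness[where f'="\<lambda>z. restrict z {0..<m}"])
  have rex: "restrict (close_walk m x) {0..<m} = x" if "x \<in> {0..<m} \<rightarrow>\<^sub>E V" for x
    using that unfolding close_walk_def by (intro ext) (auto simp: PiE_iff extensional_def)
  show "\<forall>x\<in>{x \<in> cycle_homs m V E. P x}. restrict (close_walk m x) {0..<m} = x"
    using rex by (auto simp: cycle_homs_def)
  show "\<forall>z\<in>{z \<in> walks m. z m = z 0 \<and> P (restrict z {0..<m})}. close_walk m (restrict z {0..<m}) = z"
    using assms unfolding close_walk_def walks_def by (auto intro!: ext simp: PiE_iff extensional_def)
  show "close_walk m ` {x \<in> cycle_homs m V E. P x} \<subseteq> {z \<in> walks m. z m = z 0 \<and> P (restrict z {0..<m})}"
  proof (rule image_subsetI)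
    fix x assume x: "x \<in> {x \<in> cycle_homs m V E. P x}"
    hence xp: "x \<in> {0..<m} \<rightarrow>\<^sub>E V" "\<forall>i<m. {x i, x ((i + 1) mod m)} \<in> E" "P x"
      by (auto simp: cycle_homs_def)
    have "close_walk m x \<in> {0..m} \<rightarrow>\<^sub>E V" using xp assms by (auto simp: close_walk_def PiE_iff)
    moreover have "{close_walk m x i, close_walk m x (Suc i)} \<in> E" if "i < m" for i
    proof (cases "Suc i = m")
      case True
      thus ?thesis using xp(2) that by (auto simp: close_walk_def)
    next
      case False
      thus ?thesis using xp(2) that by (auto simp: close_walk_def)
    qed
    ultimately show "close_walk m x \<in> {z \<in> walks m. z m = z 0 \<and> P (restrict z {0..<m})}"
      using assms xp rex by (auto simp: walks_def close_walk_def)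
  qed
  show "(\<lambda>z. restrict z {0..<m}) ` {z \<in> walks m. z m = z 0 \<and> P (restrict z {0..<m})}
      \<subseteq> {x \<in> cycle_homs m V E. P x}"
  proof (rule image_subsetI)
    fix z assume z: "z \<in> {z \<in> walks m. z m = z 0 \<and> P (restrict z {0..<m})}"
    hence zp: "z \<in> {0..m} \<rightarrow>\<^sub>E V" "\<forall>i<m. {z i, z (Suc i)} \<in> E" "z m = z 0"
      by (auto simp: walks_def)
    have "{restrict z {0..<m} i, restrict z {0..<m} ((i + 1) mod m)} \<in> E" if "i < m" for i
    proof (cases "Suc i = m")
      case True
      thus ?thesis using zp that assms by auto
    next
      case False
      hence "(i+1) mod m = Suc i" using that by simp
      thus ?thesis using zp that False by auto
    qed
    thus "restrict z {0..<m} \<in> {x \<in> cycle_homs m V E. P x}"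
      using z zp by (auto simp: cycle_homs_def PiE_iff)
  qed
qed

lemma card_cycle_homs_sum_closed_walks: assumes "m \<ge> 1"
  shows "card {x \<in> cycle_homs m V E. P x} = (\<Sum>u\<in>V. card {z \<in> walks_from_to m u u. P (restrict z {0..<m})})"
proof -
  have "card {x \<in> cycle_homs m V E. P x} = card {z \<in> walks m. z m = z 0 \<and> P (restrict z {0..<m})}"
    by (rule bij_betw_same_card[OF cycle_homs_closed_walks_bij[OF assms]])
  also have "\<dots> = (\<Sum>u\<in>V. card {z \<in> {z \<in> walks m. z m = z 0 \<and> P (restrict z {0..<m})}. z 0 = u})"
    by (rule card_eq_sum_card_fibres) (use finite_walks finite_V in \<open>auto simp: walks_def intro: rev_finite_subset[OF finite_walks]\<close>)
  also have "\<dots> = (\<Sum>u\<in>V. card {z \<in> walks_from_to m u u. P (restrict z {0..<m})})"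
    by (intro sum.cong refl arg_cong[where f=card]) (auto simp: walks_from_to_def)
  finally show ?thesis .
qed

lemma card_vertex_collisions: assumes "0 < d" "d < m"
  shows "card {x \<in> cycle_homs m V E. x 0 = x d} = (\<Sum>u\<in>V. num_walks d u u * num_walks (m-d) u u)"
proof -
  have "card {x \<in> cycle_homs m V E. x 0 = x d} =
     (\<Sum>u\<in>V. card {z \<in> walks_from_to m u u. restrict z {0..<m} 0 = restrict z {0..<m} d})"
    by (rule card_cycle_homs_sum_closed_walks) (use assms in simp)
  also have "\<dots> = (\<Sum>u\<in>V. num_walks d u u * num_walks (m-d) u u)"
  proof (rule sum.cong[OF refl])
    fix u
    have m: "d + (m-d) = m" using assms by simp
    have "{z \<in> walks_from_to m u u. restrict z {0..<m} 0 = restrict z {0..<m} d} =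
      {z \<in> walks_from_to (d+(m-d)) u u. z d = u \<and> (\<lambda>_. True) (walk_prefix d z) \<and> (\<lambda>_. True) (walk_suffix d (m-d) z)}"
      unfolding m using assms by (auto simp: walks_from_to_def)
    thus "card {z \<in> walks_from_to m u u. restrict z {0..<m} 0 = restrict z {0..<m} d} = num_walks d u u * num_walks (m-d) u u"
      using card_walks_split[of d "m-d" u u u "\<lambda>_. True" "\<lambda>_. True"] by (simp add: num_walks_def)
  qed
  finally show ?thesis .
qed

lemma card_walks_first_step: "card {x \<in> walks_from_to (Suc a) u v. x 1 = b} = num_walks 1 u b * num_walks a b v"
  using card_walks_split[of 1 a u v b "\<lambda>_. True" "\<lambda>_. True"] by (simp add: num_walks_def)

lemma card_walks_through: assumes "1 \<le> d" "d+1 < m"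
  shows "card {z \<in> walks_from_to m u u. z 1 = b \<and> z d = y \<and> z (d+1) = y'} =
    num_walks 1 u b * num_walks (d-1) b y * (num_walks 1 y y' * num_walks (m-d-1) y' u)"
proof -
  have m: "d + (m-d) = m" using assms by simp
  have S: "{z \<in> walks_from_to m u u. z 1 = b \<and> z d = y \<and> z (d+1) = y'} =
      {z \<in> walks_from_to (d+(m-d)) u u. z d = y \<and> (\<lambda>x. x 1 = b) (walk_prefix d z) \<and> (\<lambda>x. x 1 = y') (walk_suffix d (m-d) z)}"
  proof -
    have "\<And>z. walk_prefix d z 1 = z 1" using assms by (simp add: walk_prefix_def)
    moreover have "\<And>z. walk_suffix d (m-d) z 1 = z (d+1)"
    proof -
      have "1 \<le> m - d" using assms by simp
      thus "\<And>z. walk_suffix d (m-d) z 1 = z (d+1)" by (simp add: walk_suffix_def)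
    qed
    ultimately show ?thesis unfolding m by auto
  qed
  have "card {z \<in> walks_from_to m u u. z 1 = b \<and> z d = y \<and> z (d+1) = y'} =
     card {x \<in> walks_from_to d u y. x 1 = b} * card {x \<in> walks_from_to (m-d) y u. x 1 = y'}"
    unfolding S by (rule card_walks_split)
  also have "\<dots> = num_walks 1 u b * num_walks (d-1) b y * (num_walks 1 y y' * num_walks (m-d-1) y' u)"
  proof -
    obtain d' where d': "d = Suc d'" using assms by (cases d) auto
    obtain e' where e': "m - d = Suc e'" using assms by (cases "m-d") auto
    have "card {x \<in> walks_from_to d u y. x 1 = b} = num_walks 1 u b * num_walks (d-1) b y"
      unfolding d' using card_walks_first_step by simp
    moreover have "card {x \<in> walks_from_to (m-d) y u. x 1 = y'} = num_walks 1 y y' * num_walks (m-d-1) y' u"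
      unfolding e' using card_walks_first_step by simp
    ultimately show ?thesis by simp
  qed
  finally show ?thesis .
qed

lemma card_closed_walks_colour_collisions:
  fixes c :: "'a set \<Rightarrow> 'c"
  assumes "1 \<le> d" "d+1 < m"
  shows "card {z \<in> walks_from_to m u u. c {z 0, z 1} = c {z d, z (d+1)}} =
    (\<Sum>b\<in>V. \<Sum>y\<in>V. \<Sum>y'\<in>V. if c {u,b} = c {y,y'} then
        num_walks 1 u b * num_walks (d-1) b y * (num_walks 1 y y' * num_walks (m-d-1) y' u) else 0)"
proof -
  let ?S = "{z \<in> walks_from_to m u u. c {z 0, z 1} = c {z d, z (d+1)}}"
  have "card ?S = (\<Sum>t\<in>V \<times> V \<times> V. card {z \<in> ?S. (z 1, z d, z (d+1)) = t})"
  proof (rule card_eq_sum_card_fibres)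
    show "finite ?S" by (rule finite_walks_from_to)
    show "finite (V \<times> V \<times> V)" using finite_V by simp
    show "(\<lambda>z. (z 1, z d, z (d+1))) ` ?S \<subseteq> V \<times> V \<times> V"
      using assms by (auto simp: walks_from_to_def walks_def PiE_iff)
  qed
  also have "\<dots> = (\<Sum>(b,y,y')\<in>V \<times> V \<times> V. if c {u,b} = c {y,y'} then
      num_walks 1 u b * num_walks (d-1) b y * (num_walks 1 y y' * num_walks (m-d-1) y' u) else 0)"
  proof (rule sum.cong[OF refl], clarify)
    fix b y y'
    show "card {z \<in> ?S. (z 1, z d, z (d+1)) = (b,y,y')} = (if c {u,b} = c {y,y'} then
      num_walks 1 u b * num_walks (d-1) b y * (num_walks 1 y y' * num_walks (m-d-1) y' u) else 0)"
    proof (cases "c {u,b} = c {y,y'}")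
      case True
      hence "{z \<in> ?S. (z 1, z d, z (d+1)) = (b,y,y')} =
          {z \<in> walks_from_to m u u. z 1 = b \<and> z d = y \<and> z (d+1) = y'}" by (auto simp: walks_from_to_def)
      thus ?thesis using True card_walks_through[OF assms] by simp
    next
      case False
      then have "{z \<in> ?S. (z 1, z d, z (d+1)) = (b,y,y')} = {}" by (auto simp: walks_from_to_def)
      then show ?thesis using False by (simp only:) simp
    qed
  qed
  also have "\<dots> = (\<Sum>b\<in>V. \<Sum>y\<in>V. \<Sum>y'\<in>V. if c {u,b} = c {y,y'} then
      num_walks 1 u b * num_walks (d-1) b y * (num_walks 1 y y' * num_walks (m-d-1) y' u) else 0)"
    by (simp add: sum.cartesian_product)
  finally show ?thesis .
qed

lemma card_colour_collisions:
  fixes c :: "'a set \<Rightarrow> 'c"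
  assumes "1 \<le> d" "d+1 < m"
  shows "card {x \<in> cycle_homs m V E. c {x 0, x 1} = c {x d, x (d+1)}} =
    (\<Sum>u\<in>V. \<Sum>b\<in>V. \<Sum>y\<in>V. \<Sum>y'\<in>V. if c {u,b} = c {y,y'} then
        num_walks 1 u b * num_walks (d-1) b y * (num_walks 1 y y' * num_walks (m-d-1) y' u) else 0)"
proof -
  have "card {x \<in> cycle_homs m V E. c {x 0, x 1} = c {x d, x (d+1)}} =
     (\<Sum>u\<in>V. card {z \<in> walks_from_to m u u. c {restrict z {0..<m} 0, restrict z {0..<m} 1} =
          c {restrict z {0..<m} d, restrict z {0..<m} (d+1)}})"
    by (rule card_cycle_homs_sum_closed_walks) (use assms in simp)
  also have "\<dots> = (\<Sum>u\<in>V. card {z \<in> walks_from_to m u u. c {z 0, z 1} = c {z d, z (d+1)}})"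
    using assms by (intro sum.cong refl arg_cong[where f=card]) auto
  also have "\<dots> = (\<Sum>u\<in>V. \<Sum>b\<in>V. \<Sum>y\<in>V. \<Sum>y'\<in>V. if c {u,b} = c {y,y'} then
        num_walks 1 u b * num_walks (d-1) b y * (num_walks 1 y y' * num_walks (m-d-1) y' u) else 0)"
    by (rule sum.cong[OF refl], rule card_closed_walks_colour_collisions[OF assms])
  finally show ?thesis .
qed

definition walk_weight :: "nat \<Rightarrow> 'a \<Rightarrow> 'a \<Rightarrow> real" where "walk_weight a u v = real (num_walks a u v)"

lemma walk_weight_add: "walk_weight (a+b) x y = (\<Sum>w\<in>V. walk_weight a x w * walk_weight b w y)"
  unfolding walk_weight_def num_walks_add by simp
lemma walk_weight_sym: "walk_weight a x y = walk_weight a y x" unfolding walk_weight_def using num_walks_sym by simp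
lemma walk_weight_nonneg: "walk_weight a x y \<ge> 0" by (simp add: walk_weight_def)
lemma walk_weight_0: "\<beta> \<in> V \<Longrightarrow> walk_weight 0 \<beta> y = (if \<beta> = y then 1 else 0)" by (simp add: walk_weight_def num_walks_0)

definition diag_indicator :: "'a \<Rightarrow> 'a \<Rightarrow> 'a \<Rightarrow> real" where "diag_indicator k x y = (if x = k \<and> y = k then 1 else 0)"

lemma diag_indicator_sym: "diag_indicator k x y = diag_indicator k y x" by (auto simp: diag_indicator_def)
lemma diag_indicator_nonneg: "diag_indicator k x y \<ge> 0" by (simp add: diag_indicator_def)

lemma trace_form_diag: "trace_form V walk_weight V diag_indicator a b = (\<Sum>u\<in>V. walk_weight a u u * walk_weight b u u)"
proof -
  have *: "(\<Sum>u\<in>V. \<Sum>\<beta>\<in>V. \<Sum>y\<in>V. \<Sum>y'\<in>V. diag_indicator k u \<beta> * diag_indicator k y y' * (walk_weight a \<beta> y * walk_weight b y' u))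
      = walk_weight a k k * walk_weight b k k"
    if "k \<in> V" for k
  proof -
    have "(\<Sum>u\<in>V. \<Sum>\<beta>\<in>V. \<Sum>y\<in>V. \<Sum>y'\<in>V. diag_indicator k u \<beta> * diag_indicator k y y' * (walk_weight a \<beta> y * walk_weight b y' u)) =
      (\<Sum>u\<in>V. \<Sum>\<beta>\<in>V. \<Sum>y\<in>V. \<Sum>y'\<in>V. if y' = k then (if y = k then (if \<beta> = k then
          (if u = k then walk_weight a k k * walk_weight b k k else 0) else 0) else 0) else 0)"
      by (intro sum.cong refl) (simp add: diag_indicator_def)
    also have "\<dots> = walk_weight a k k * walk_weight b k k" using that finite_V by (simp add: sum.delta)
    finally show ?thesis .
  qed
  show ?thesis unfolding trace_form_def by (rule sum.cong[OF refl]) (rule *)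
qed

lemma trace_form_diag_2: "trace_form V walk_weight V diag_indicator 2 b = (\<Sum>u\<in>V. real (degree E u) * walk_weight b u u)"
  unfolding trace_form_diag by (intro sum.cong refl) (simp add: walk_weight_def num_walks_2)

definition closed_walks :: "nat \<Rightarrow> real" where "closed_walks j = (\<Sum>u\<in>V. walk_weight (2*j) u u)"

lemma closed_walks_trace_form: "closed_walks j = trace_form V walk_weight V diag_indicator (2*j) 0"
  unfolding trace_form_diag closed_walks_def by (intro sum.cong refl) (simp add: walk_weight_0)

lemma closed_walks_nonneg: "closed_walks j \<ge> 0" unfolding closed_walks_def by (intro sum_nonneg) (simp add: walk_weight_nonneg)

lemma closed_walks_0: "closed_walks 0 = real (card V)"
  unfolding closed_walks_def by (simp add: walk_weight_0)

lemma diag_trace_form_Cauchy_Schwarz: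
  "(trace_form V walk_weight V diag_indicator (a1+a2) (b1+b2))\<^sup>2 \<le>
     trace_form V walk_weight V diag_indicator (2*a1) (2*b2) *
     trace_form V walk_weight V diag_indicator (2*a2) (2*b1)"
  by (rule trace_form_Cauchy_Schwarz) (auto simp: diag_indicator_sym walk_weight_sym walk_weight_add)

lemma closed_walks_log_convex: "(closed_walks (Suc j))\<^sup>2 \<le> closed_walks j * closed_walks (Suc (Suc j))"
proof -
  have "(trace_form V walk_weight V diag_indicator (j + (j+2)) (0+0))\<^sup>2 \<le>
      trace_form V walk_weight V diag_indicator (2*j) (2*0) * trace_form V walk_weight V diag_indicator (2*(j+2)) (2*0)"
    by (rule diag_trace_form_Cauchy_Schwarz)
  moreover have a: "j + (j+2) = 2 * Suc j" and c: "2*(j+2) = 2 * Suc (Suc j)" by simp_all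
  moreover have b: "(0::nat) + 0 = 0" "2*(0::nat) = 0" by simp_all
  ultimately show ?thesis unfolding a b c closed_walks_trace_form[symmetric] by simp
qed

lemma closed_walks_interpolation: "closed_walks j ^ (j+1) \<le> real (card V) * closed_walks (j+1) ^ j"
  by (rule log_convex_power_interpolation) (auto simp: closed_walks_nonneg closed_walks_0 closed_walks_log_convex)

lemma card_cycle_homs_eq_closed_walks:
  assumes "k \<ge> 1" shows "real (card (cycle_homs (2*k) V E)) = closed_walks k"
proof -
  have "card (cycle_homs (2*k) V E) = card {x \<in> cycle_homs (2*k) V E. True}" by simp
  also have "\<dots> = (\<Sum>u\<in>V. card {z \<in> walks_from_to (2*k) u u. True})"
    by (rule card_cycle_homs_sum_closed_walks) (use assms in simp)
  finally show ?thesis by (simp add: closed_walks_def walk_weight_def num_walks_def of_nat_sum)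
qed

definition rotate_hom :: "nat \<Rightarrow> nat \<Rightarrow> (nat \<Rightarrow> 'a) \<Rightarrow> (nat \<Rightarrow> 'a)" where
  "rotate_hom m i x = restrict (\<lambda>t. x ((t+i) mod m)) {0..<m}"

lemma rotate_hom_apply: "t < m \<Longrightarrow> rotate_hom m i x t = x ((t+i) mod m)" by (simp add: rotate_hom_def)

lemma finite_cycle_homs: "finite (cycle_homs m V E)"
proof -
  have "finite ({0..<m} \<rightarrow>\<^sub>E V)" using finite_V by (simp add: finite_PiE)
  thus ?thesis unfolding cycle_homs_def by simp
qed

lemma rotate_hom_cycle_homs: assumes "x \<in> cycle_homs m V E" "0 < m" shows "rotate_hom m i x \<in> cycle_homs m V E"
proof -
  have x: "x \<in> {0..<m} \<rightarrow>\<^sub>E V" "\<forall>t<m. {x t, x ((t + 1) mod m)} \<in> E"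
    using assms by (auto simp: cycle_homs_def)
  have "rotate_hom m i x \<in> {0..<m} \<rightarrow>\<^sub>E V" using x assms by (auto simp: rotate_hom_def PiE_iff)
  moreover have "{rotate_hom m i x t, rotate_hom m i x ((t + 1) mod m)} \<in> E" if "t < m" for t
  proof -
    have "((t + 1) mod m + i) mod m = ((t+i) mod m + 1) mod m"
    proof -
      have "((t + 1) mod m + i) mod m = (t + 1 + i) mod m" by (rule mod_add_left_eq)
      moreover have "((t+i) mod m + 1) mod m = (t + i + 1) mod m" by (rule mod_add_left_eq)
      moreover have "t + 1 + i = t + i + 1" by simp
      ultimately show ?thesis by simp
    qed
    hence "{rotate_hom m i x t, rotate_hom m i x ((t + 1) mod m)} = {x ((t+i) mod m), x (((t+i) mod m + 1) mod m)}"
      using that assms by (simp add: rotate_hom_apply)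
    also have "\<dots> \<in> E" using x(2) assms by simp
    finally show ?thesis .
  qed
  ultimately show ?thesis by (simp add: cycle_homs_def)
qed

lemma inj_on_rotate_hom: assumes "i < m" shows "inj_on (rotate_hom m i) (cycle_homs m V E)"
proof (rule inj_onI)
  fix x y assume x: "x \<in> cycle_homs m V E" and y: "y \<in> cycle_homs m V E" and e: "rotate_hom m i x = rotate_hom m i y"
  have xp: "x \<in> {0..<m} \<rightarrow>\<^sub>E V" and yp: "y \<in> {0..<m} \<rightarrow>\<^sub>E V" using x y by (auto simp: cycle_homs_def)
  show "x = y"
  proof (rule PiE_ext[OF xp yp])
    fix t assume t: "t \<in> {0..<m}"
    define t' where "t' = (t + (m - i)) mod m"
    have t'm: "t' < m" using assms by (simp add: t'_def)
    have "(t' + i) mod m = (t + (m - i) + i) mod m" by (simp add: t'_def mod_add_left_eq)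
    also have "t + (m - i) + i = t + m" using assms by simp
    also have "(t + m) mod m = t" using t by simp
    finally have tt: "(t' + i) mod m = t" .
    have "x t = rotate_hom m i x t'" using tt t'm by (simp add: rotate_hom_apply)
    also have "\<dots> = rotate_hom m i y t'" using e by simp
    also have "\<dots> = y t" using tt t'm by (simp add: rotate_hom_apply)
    finally show "x t = y t" .
  qed
qed

lemma card_le_card_rotate: assumes "i < m" "\<And>x. x \<in> cycle_homs m V E \<Longrightarrow> P x \<Longrightarrow> Q (rotate_hom m i x)"
  shows "card {x \<in> cycle_homs m V E. P x} \<le> card {y \<in> cycle_homs m V E. Q y}"
proof (rule card_inj_on_le)
  show "inj_on (rotate_hom m i) {x \<in> cycle_homs m V E. P x}"
    using inj_on_rotate_hom[OF assms(1)] by (rule inj_on_subset) auto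
  show "rotate_hom m i ` {x \<in> cycle_homs m V E. P x} \<subseteq> {y \<in> cycle_homs m V E. Q y}"
    using assms rotate_hom_cycle_homs by auto
  show "finite {y \<in> cycle_homs m V E. Q y}" using finite_cycle_homs by simp
qed

lemma card_vertex_collisions_rotate: assumes "i < j" "j < m"
  shows "card {x \<in> cycle_homs m V E. x i = x j} \<le> card {y \<in> cycle_homs m V E. y 0 = y (j-i)}"
proof (rule card_le_card_rotate)
  show "i < m" using assms by simp
  fix x :: "nat \<Rightarrow> 'a" assume "x i = x j"
  moreover have "rotate_hom m i x 0 = x i" using assms by (simp add: rotate_hom_apply)
  moreover have "rotate_hom m i x (j-i) = x j" using assms by (simp add: rotate_hom_apply)
  ultimately show "rotate_hom m i x 0 = rotate_hom m i x (j-i)" by simp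
qed


lemma cycle_hom_repeat_far_apart:
  assumes x: "x \<in> cycle_homs m V E" and ab: "a < b" "b < m" "x a = x b"
  shows "a + 2 \<le> b \<and> b + 2 \<le> a + m"
proof -
  have xe: "{x t, x ((t + 1) mod m)} \<in> E" if "t < m" for t
    using x that by (auto simp: cycle_homs_def)
  have "b \<noteq> a + 1"
    using xe[of a] ab edge_distinct[of "x a" "x b"] by auto
  moreover have "\<not> (a = 0 \<and> b = m - 1)"
  proof
    assume "a = 0 \<and> b = m - 1"
    then have "{x b, x a} \<in> E" using xe[of b] ab by simp
    then show False using edge_distinct[of "x b" "x a"] ab by simp
  qed
  ultimately show ?thesis using ab by auto
qed

lemma degree_le_max_degree: "u \<in> V \<Longrightarrow> degree E u \<le> max_degree V E"
  unfolding max_degree_def using finite_V by (intro Max_ge) auto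

lemma sum_degree_walk_weight_le:
  "(\<Sum>u\<in>V. real (degree E u) * walk_weight (2*j) u u) \<le> real (max_degree V E) * closed_walks j"
proof -
  have "(\<Sum>u\<in>V. real (degree E u) * walk_weight (2*j) u u)
      \<le> (\<Sum>u\<in>V. real (max_degree V E) * walk_weight (2*j) u u)"
    by (intro sum_mono mult_right_mono) (auto simp: degree_le_max_degree walk_weight_nonneg)
  then show ?thesis by (simp add: closed_walks_def sum_distrib_left)
qed

lemma card_vertex_collisions_le:
  assumes "2 \<le> d" "d \<le> 2*k - 2"
  shows "real (card {x \<in> cycle_homs (2*k) V E. x 0 = x d}) \<le> real (max_degree V E) * closed_walks (k-1)"
proof -
  have "real (card {x \<in> cycle_homs (2*k) V E. x 0 = x d}) =
      trace_form V walk_weight V diag_indicator d (2*k - d)"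
    using assms by (simp add: card_vertex_collisions trace_form_diag walk_weight_def of_nat_sum)
  also have "\<dots> \<le> trace_form V walk_weight V diag_indicator (2*1) (2*k - 2*1)"
    by (rule log_convex_antidiagonal_max)
      (use assms diag_trace_form_Cauchy_Schwarz trace_form_commute[OF diag_indicator_sym walk_weight_sym]
        in \<open>auto intro: trace_form_nonneg diag_indicator_nonneg walk_weight_nonneg\<close>)
  also have "\<dots> = (\<Sum>u\<in>V. real (degree E u) * walk_weight (2*(k-1)) u u)"
    using trace_form_diag_2[of "2*(k-1)"] by (simp add: right_diff_distrib')
  also have "\<dots> \<le> real (max_degree V E) * closed_walks (k-1)"
    by (rule sum_degree_walk_weight_le)
  finally show ?thesis .
qed

lemma closed_walks_step_bound:
  assumes "k \<ge> 1" "L > 0"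
    and "closed_walks k > L ^ k * real (card V) * real (max_degree V E) ^ k"
  shows "L * (real (max_degree V E) * closed_walks (k-1)) \<le> closed_walks k"
proof -
  have "closed_walks (k-1) ^ k \<le> real (card V) * closed_walks k ^ (k-1)"
    using closed_walks_interpolation[of "k-1"] assms(1) by simp
  then have "L * real (max_degree V E) * closed_walks (k-1) \<le> closed_walks k"
    using assms by (intro mult_le_from_power_bounds) (auto simp: closed_walks_nonneg)
  then show ?thesis by (simp add: mult_ac)
qed

end

locale properly_edge_coloured = finite_simple_graph +
  fixes c :: "'a set \<Rightarrow> 'c"
  assumes proper: "proper_edge_colouring E c"
begin

definition colour_indicator :: "'c \<Rightarrow> 'a \<Rightarrow> 'a \<Rightarrow> real" where
  "colour_indicator k x y = (if {x,y} \<in> E \<and> c {x,y} = k then 1 else 0)"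

lemma colour_indicator_sym: "colour_indicator k x y = colour_indicator k y x" by (simp add: colour_indicator_def insert_commute)
lemma colour_indicator_nonneg: "colour_indicator k x y \<ge> 0" by (simp add: colour_indicator_def)
lemma colour_indicator_idem: "colour_indicator k x y * colour_indicator k x y = colour_indicator k x y" by (simp add: colour_indicator_def)

lemma same_colour_adjacent_edges: assumes "{u,\<beta>} \<in> E" "{\<beta>,y} \<in> E" "c {u,\<beta>} = c {\<beta>,y}" shows "y = u"
proof -
  have "{u,\<beta>} = {\<beta>,y}"
  proof (rule ccontr)
    assume ne: "{u,\<beta>} \<noteq> {\<beta>,y}"
    have "{u,\<beta>} \<inter> {\<beta>,y} \<noteq> {}" by auto
    hence "c {u,\<beta>} \<noteq> c {\<beta>,y}"
      using proper assms(1,2) ne unfolding proper_edge_colouring_def by simp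
    thus False using assms(3) by simp
  qed
  thus ?thesis using edge_distinct[OF assms(1)] by (auto simp: doubleton_eq_iff)
qed

lemma sum_colour_indicator: "(\<Sum>k\<in>c ` E. colour_indicator k u \<beta> * colour_indicator k y y') =
   (if {u,\<beta>} \<in> E \<and> {y,y'} \<in> E \<and> c {u,\<beta>} = c {y,y'} then 1 else 0)"
proof (cases "{u,\<beta>} \<in> E \<and> {y,y'} \<in> E \<and> c {u,\<beta>} = c {y,y'}")
  case True
  have "(\<Sum>k\<in>c ` E. colour_indicator k u \<beta> * colour_indicator k y y') = (\<Sum>k\<in>c ` E. if k = c {u,\<beta>} then 1 else 0)"
    using True by (intro sum.cong refl) (auto simp: colour_indicator_def)
  also have "\<dots> = 1" using True finite_E by simp
  finally show ?thesis using True by simp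
next
  case False
  have "(\<Sum>k\<in>c ` E. colour_indicator k u \<beta> * colour_indicator k y y') = (\<Sum>k\<in>c ` E. 0)"
    using False by (intro sum.cong refl) (auto simp: colour_indicator_def)
  thus ?thesis using False by simp
qed

lemma colour_collisions_trace_form: assumes "1 \<le> d" "d+1 < m"
  shows "real (card {x \<in> cycle_homs m V E. c {x 0, x 1} = c {x d, x (d+1)}}) =
     trace_form V walk_weight (c ` E) colour_indicator (d-1) (m-d-1)"
proof -
  have leaf: "(\<Sum>k\<in>c ` E. colour_indicator k u \<beta> * colour_indicator k y y' * (walk_weight (d-1) \<beta> y * walk_weight (m-d-1) y' u)) =
     real (if c {u,\<beta>} = c {y,y'} then num_walks 1 u \<beta> * num_walks (d-1) \<beta> y * (num_walks 1 y y' * num_walks (m-d-1) y' u) else 0)"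
    if "u \<in> V" "\<beta> \<in> V" "y \<in> V" "y' \<in> V" for u \<beta> y y'
  proof -
    have "(\<Sum>k\<in>c ` E. colour_indicator k u \<beta> * colour_indicator k y y' * (walk_weight (d-1) \<beta> y * walk_weight (m-d-1) y' u)) =
       (\<Sum>k\<in>c ` E. colour_indicator k u \<beta> * colour_indicator k y y') * (walk_weight (d-1) \<beta> y * walk_weight (m-d-1) y' u)"
      by (simp add: sum_distrib_right)
    also have "\<dots> = real (if c {u,\<beta>} = c {y,y'}
        then num_walks 1 u \<beta> * num_walks (d-1) \<beta> y * (num_walks 1 y y' * num_walks (m-d-1) y' u) else 0)"
      unfolding sum_colour_indicator using num_walks_1[OF that(1,2)] num_walks_1[OF that(3,4)] by (simp add: walk_weight_def)
    finally show ?thesis .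
  qed
  have "trace_form V walk_weight (c ` E) colour_indicator (d-1) (m-d-1) = (\<Sum>u\<in>V. \<Sum>\<beta>\<in>V. \<Sum>y\<in>V. \<Sum>y'\<in>V. \<Sum>k\<in>c ` E.
      colour_indicator k u \<beta> * colour_indicator k y y' * (walk_weight (d-1) \<beta> y * walk_weight (m-d-1) y' u))"
    unfolding trace_form_def by (rule sum_swap_into4)
  also have "\<dots> = (\<Sum>u\<in>V. \<Sum>\<beta>\<in>V. \<Sum>y\<in>V. \<Sum>y'\<in>V.
     real (if c {u,\<beta>} = c {y,y'} then num_walks 1 u \<beta> * num_walks (d-1) \<beta> y * (num_walks 1 y y' * num_walks (m-d-1) y' u) else 0))"
    by ((rule sum.cong[OF refl])+, rule leaf, assumption+)
  also have "\<dots> = real (card {x \<in> cycle_homs m V E. c {x 0, x 1} = c {x d, x (d+1)}})"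
    unfolding card_colour_collisions[OF assms] of_nat_sum ..
  finally show ?thesis by simp
qed

lemma sum_colour_indicator_return:
  assumes "u \<in> V"
  shows "(\<Sum>y\<in>V. colour_indicator k u \<beta> * colour_indicator k \<beta> y * f y) = colour_indicator k u \<beta> * f u"
proof -
  have "(\<Sum>y\<in>V. colour_indicator k u \<beta> * colour_indicator k \<beta> y * f y) =
      (\<Sum>y\<in>V. if y = u then colour_indicator k u \<beta> * f u else 0)"
  proof (rule sum.cong[OF refl])
    fix y
    show "colour_indicator k u \<beta> * colour_indicator k \<beta> y * f y = (if y = u then colour_indicator k u \<beta> * f u else 0)"
    proof (cases "y = u")
      case True
      then show ?thesis using colour_indicator_idem[of k u \<beta>] colour_indicator_sym[of k \<beta> u] by simp
    next
      case False
      then have "colour_indicator k u \<beta> * colour_indicator k \<beta> y = 0"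
        using same_colour_adjacent_edges by (auto simp: colour_indicator_def)
      then show ?thesis using False by simp
    qed
  qed
  also have "\<dots> = colour_indicator k u \<beta> * f u" using assms finite_V by (simp add: sum.delta)
  finally show ?thesis .
qed

lemma trace_form_colour_0: "trace_form V walk_weight (c ` E) colour_indicator 0 b = (\<Sum>u\<in>V. real (degree E u) * walk_weight b u u)"
proof -
  have step_zero: "(\<Sum>y\<in>V. \<Sum>y'\<in>V. colour_indicator k u \<beta> * colour_indicator k y y' * (walk_weight 0 \<beta> y * walk_weight b y' u)) =
     (\<Sum>y'\<in>V. colour_indicator k u \<beta> * colour_indicator k \<beta> y' * walk_weight b y' u)" if "\<beta> \<in> V" for k u \<beta>
  proof -
    have "(\<Sum>y\<in>V. \<Sum>y'\<in>V. colour_indicator k u \<beta> * colour_indicator k y y' * (walk_weight 0 \<beta> y * walk_weight b y' u)) =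
      (\<Sum>y\<in>V. if \<beta> = y then (\<Sum>y'\<in>V. colour_indicator k u \<beta> * colour_indicator k \<beta> y' * walk_weight b y' u) else 0)"
      using that by (intro sum.cong refl) (auto simp: walk_weight_0)
    also have "\<dots> = (\<Sum>y'\<in>V. colour_indicator k u \<beta> * colour_indicator k \<beta> y' * walk_weight b y' u)" using that finite_V by simp
    finally show ?thesis .
  qed
  have "trace_form V walk_weight (c ` E) colour_indicator 0 b = (\<Sum>k\<in>c ` E. \<Sum>u\<in>V. \<Sum>\<beta>\<in>V. colour_indicator k u \<beta> * walk_weight b u u)"
    unfolding trace_form_def by (intro sum.cong refl) (simp add: step_zero sum_colour_indicator_return)
  also have "\<dots> = (\<Sum>u\<in>V. \<Sum>\<beta>\<in>V. \<Sum>k\<in>c ` E. colour_indicator k u \<beta> * walk_weight b u u)" by (rule sum_swap_into2)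
  also have "\<dots> = (\<Sum>u\<in>V. \<Sum>\<beta>\<in>V. (if {u,\<beta>} \<in> E then 1 else 0) * walk_weight b u u)"
  proof (intro sum.cong refl)
    fix u \<beta>
    have "(\<Sum>k\<in>c ` E. colour_indicator k u \<beta> * walk_weight b u u) =
        (\<Sum>k\<in>c ` E. colour_indicator k u \<beta> * colour_indicator k u \<beta>) * walk_weight b u u"
      by (simp add: sum_distrib_right colour_indicator_idem)
    thus "(\<Sum>k\<in>c ` E. colour_indicator k u \<beta> * walk_weight b u u) = (if {u,\<beta>} \<in> E then 1 else 0) * walk_weight b u u"
      unfolding sum_colour_indicator by simp
  qed
  also have "\<dots> = (\<Sum>u\<in>V. real (degree E u) * walk_weight b u u)"
    by (intro sum.cong refl) (auto simp: degree_eq_sum of_nat_sum sum_distrib_right intro!: sum.cong)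
  finally show ?thesis .
qed

lemma card_colour_collisions_rotate: assumes "i < j" "j - i + 1 < m" "j < m"
  shows "card {x \<in> cycle_homs m V E. c {x i, x ((i+1) mod m)} = c {x j, x ((j+1) mod m)}}
     \<le> card {y \<in> cycle_homs m V E. c {y 0, y 1} = c {y (j-i), y (j-i+1)}}"
proof (rule card_le_card_rotate)
  show "i < m" using assms by simp
  fix x :: "nat \<Rightarrow> 'a" assume "c {x i, x ((i+1) mod m)} = c {x j, x ((j+1) mod m)}"
  moreover have "rotate_hom m i x 0 = x i" using assms by (simp add: rotate_hom_apply)
  moreover have "rotate_hom m i x 1 = x ((i+1) mod m)" using assms by (simp add: rotate_hom_apply add.commute)
  moreover have "rotate_hom m i x (j-i) = x j" using assms by (simp add: rotate_hom_apply)
  moreover have "rotate_hom m i x (j-i+1) = x ((j+1) mod m)" using assms by (simp add: rotate_hom_apply)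
  ultimately show "c {rotate_hom m i x 0, rotate_hom m i x 1} = c {rotate_hom m i x (j-i), rotate_hom m i x (j-i+1)}" by simp
qed

lemma cycle_hom_colour_repeat_far_apart:
  assumes x: "x \<in> cycle_homs m V E" and inj: "inj_on x {0..<m}" and "m \<ge> 3"
    and ab: "a < b" "b < m" and col: "c {x a, x ((a+1) mod m)} = c {x b, x ((b+1) mod m)}"
  shows "a + 2 \<le> b \<and> b + 2 \<le> a + m"
proof -
  have xe: "{x t, x ((t + 1) mod m)} \<in> E" if "t < m" for t
    using x that by (auto simp: cycle_homs_def)
  have "b \<noteq> a + 1"
  proof
    assume b: "b = a + 1"
    have "x ((b+1) mod m) = x a"
      using same_colour_adjacent_edges[of "x a" "x b" "x ((b+1) mod m)"] xe[of a] xe[of b] col ab b by simp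
    then have "(b+1) mod m = a" using inj ab by (auto simp: inj_on_def)
    moreover have "(b+1) mod m \<noteq> a"
    proof (cases "b + 1 < m")
      case False
      then have "b + 1 = m" using ab by simp
      then show ?thesis using b \<open>m \<ge> 3\<close> by simp
    qed (use b in simp)
    ultimately show False by simp
  qed
  moreover have "\<not> (a = 0 \<and> b = m - 1)"
  proof
    assume a0: "a = 0 \<and> b = m - 1"
    then have "(b+1) mod m = 0" using ab by simp
    then have "x 1 = x b"
      using same_colour_adjacent_edges[of "x b" "x 0" "x 1"] xe[of b] xe[of 0] col ab a0 \<open>m \<ge> 3\<close> by simp
    then have "1 = b" using inj ab \<open>m \<ge> 3\<close> by (auto simp: inj_on_def)
    then show False using a0 \<open>m \<ge> 3\<close> by simp
  qed
  ultimately show ?thesis using ab by auto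
qed

lemma non_rainbow_collision:
  assumes "m \<ge> 3" and x: "x \<in> cycle_homs m V E"
    and "\<not> (inj_on x {0..<m} \<and> inj_on (\<lambda>i. c {x i, x ((i+1) mod m)}) {0..<m})"
  shows "\<exists>i j. i < j \<and> j < m \<and> i + 2 \<le> j \<and> j + 2 \<le> i + m \<and>
     (x i = x j \<or> c {x i, x ((i+1) mod m)} = c {x j, x ((j+1) mod m)})"
proof (cases "inj_on x {0..<m}")
  case False
  then obtain a b where "a < b" "b < m" "x a = x b" by (rule not_inj_on_atLeastLessThanE)
  then show ?thesis using cycle_hom_repeat_far_apart[OF x] by blast
next
  case True
  with assms(3) obtain a b where
    "a < b" "b < m" "c {x a, x ((a+1) mod m)} = c {x b, x ((b+1) mod m)}"
    by (auto elim: not_inj_on_atLeastLessThanE)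
  then show ?thesis using cycle_hom_colour_repeat_far_apart[OF x True assms(1)] by blast
qed

lemma colour_trace_form_Cauchy_Schwarz:
  "(trace_form V walk_weight (c ` E) colour_indicator (a1+a2) (b1+b2))\<^sup>2 \<le>
     trace_form V walk_weight (c ` E) colour_indicator (2*a1) (2*b2) *
     trace_form V walk_weight (c ` E) colour_indicator (2*a2) (2*b1)"
  by (rule trace_form_Cauchy_Schwarz) (auto simp: colour_indicator_sym walk_weight_sym walk_weight_add)

lemma card_colour_collisions_le:
  assumes "2 \<le> d" "d \<le> 2*k - 2"
  shows "real (card {x \<in> cycle_homs (2*k) V E. c {x 0, x 1} = c {x d, x (d+1)}})
           \<le> real (max_degree V E) * closed_walks (k-1)"
proof -
  have "real (card {x \<in> cycle_homs (2*k) V E. c {x 0, x 1} = c {x d, x (d+1)}}) =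
      trace_form V walk_weight (c ` E) colour_indicator (d-1) (2*k-d-1)"
    by (rule colour_collisions_trace_form) (use assms in auto)
  also have "2*k - d - 1 = 2*(k-1) - (d-1)" using assms by simp
  also have "trace_form V walk_weight (c ` E) colour_indicator (d-1) (2*(k-1) - (d-1))
      \<le> trace_form V walk_weight (c ` E) colour_indicator (2*0) (2*(k-1) - 2*0)"
    by (rule log_convex_antidiagonal_max)
      (use assms colour_trace_form_Cauchy_Schwarz trace_form_commute[OF colour_indicator_sym walk_weight_sym]
        in \<open>auto intro: trace_form_nonneg colour_indicator_nonneg walk_weight_nonneg\<close>)
  also have "\<dots> = (\<Sum>u\<in>V. real (degree E u) * walk_weight (2*(k-1)) u u)"
    using trace_form_colour_0 by simp
  also have "\<dots> \<le> real (max_degree V E) * closed_walks (k-1)"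
    by (rule sum_degree_walk_weight_le)
  finally show ?thesis .
qed

definition collision_homs :: "nat \<Rightarrow> nat \<Rightarrow> nat \<Rightarrow> (nat \<Rightarrow> 'a) set" where
  "collision_homs m i j = {x \<in> cycle_homs m V E. x i = x j} \<union>
     {x \<in> cycle_homs m V E. c {x i, x ((i+1) mod m)} = c {x j, x ((j+1) mod m)}}"

lemma card_collision_homs_le:
  assumes "i + 2 \<le> j" "j < 2*k" "j + 2 \<le> i + 2*k"
  shows "real (card (collision_homs (2*k) i j)) \<le> 2 * (real (max_degree V E) * closed_walks (k-1))"
proof -
  let ?cyc = "cycle_homs (2*k) V E"
  have d: "2 \<le> j - i" "j - i \<le> 2*k - 2" using assms by auto
  have "card (collision_homs (2*k) i j) \<le> card {x \<in> ?cyc. x i = x j} +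
      card {x \<in> ?cyc. c {x i, x ((i+1) mod (2*k))} = c {x j, x ((j+1) mod (2*k))}}"
    unfolding collision_homs_def by (rule card_Un_le)
  also have "\<dots> \<le> card {y \<in> ?cyc. y 0 = y (j-i)} + card {y \<in> ?cyc. c {y 0, y 1} = c {y (j-i), y (j-i+1)}}"
    by (intro add_mono card_vertex_collisions_rotate card_colour_collisions_rotate) (use assms in auto)
  finally have "real (card (collision_homs (2*k) i j)) \<le> real (card {y \<in> ?cyc. y 0 = y (j-i)}) +
      real (card {y \<in> ?cyc. c {y 0, y 1} = c {y (j-i), y (j-i+1)}})" by linarith
  then show ?thesis
    using card_vertex_collisions_le[OF d] card_colour_collisions_le[OF d] by linarith
qed

definition non_rainbow_homs :: "nat \<Rightarrow> (nat \<Rightarrow> 'a) set" where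
  "non_rainbow_homs m = {x \<in> cycle_homs m V E.
     \<not> (inj_on x {0..<m} \<and> inj_on (\<lambda>i. c {x i, x ((i+1) mod m)}) {0..<m})}"

lemma non_rainbow_homs_subset:
  assumes "m \<ge> 3"
  shows "non_rainbow_homs m \<subseteq>
    (\<Union>i\<in>{0..<m}. \<Union>j\<in>{j. i + 2 \<le> j \<and> j < m \<and> j + 2 \<le> i + m}. collision_homs m i j)"
proof
  fix x assume "x \<in> non_rainbow_homs m"
  then have x: "x \<in> cycle_homs m V E"
    "\<not> (inj_on x {0..<m} \<and> inj_on (\<lambda>i. c {x i, x ((i+1) mod m)}) {0..<m})"
    by (auto simp: non_rainbow_homs_def)
  from non_rainbow_collision[OF assms x] obtain i j where
    "i < j" "j < m" "i + 2 \<le> j" "j + 2 \<le> i + m"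
    "x i = x j \<or> c {x i, x ((i+1) mod m)} = c {x j, x ((j+1) mod m)}"
    by blast
  then show "x \<in> (\<Union>i\<in>{0..<m}. \<Union>j\<in>{j. i + 2 \<le> j \<and> j < m \<and> j + 2 \<le> i + m}. collision_homs m i j)"
    using x(1) by (intro UN_I[of i] UN_I[of j]) (auto simp: collision_homs_def)
qed

lemma card_non_rainbow_homs_le:
  assumes "k \<ge> 2"
  shows "real (card (non_rainbow_homs (2*k))) \<le> 8 * real k ^ 2 * (real (max_degree V E) * closed_walks (k-1))"
proof -
  define m where "m = 2*k"
  define Q where "Q = real (max_degree V E) * closed_walks (k-1)"
  define J where "J i = {j. i + 2 \<le> j \<and> j < m \<and> j + 2 \<le> i + m}" for i
  have finJ: "finite (J i)" for i
    unfolding J_def by (rule finite_subset[of _ "{0..<m}"]) auto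
  have cardJ: "card (J i) \<le> m" for i
    using card_mono[of "{0..<m}" "J i"] by (fastforce simp: J_def)
  have "card (non_rainbow_homs m) \<le> card (\<Union>i\<in>{0..<m}. \<Union>j\<in>J i. collision_homs m i j)"
    using non_rainbow_homs_subset[of m] assms finite_cycle_homs
    by (intro card_mono) (auto simp: m_def J_def collision_homs_def)
  also have "\<dots> \<le> (\<Sum>i\<in>{0..<m}. card (\<Union>j\<in>J i. collision_homs m i j))"
    by (rule card_UN_le) simp
  also have "\<dots> \<le> (\<Sum>i\<in>{0..<m}. \<Sum>j\<in>J i. card (collision_homs m i j))"
    by (intro sum_mono card_UN_le finJ)
  finally have "real (card (non_rainbow_homs m)) \<le> (\<Sum>i\<in>{0..<m}. \<Sum>j\<in>J i. real (card (collision_homs m i j)))"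
    unfolding of_nat_sum[symmetric] by (rule of_nat_mono)
  also have "\<dots> \<le> (\<Sum>i\<in>{0..<m}. \<Sum>j\<in>J i. 2 * Q)"
    unfolding m_def Q_def by (intro sum_mono card_collision_homs_le) (auto simp: J_def m_def)
  also have "\<dots> \<le> (\<Sum>i\<in>{0..<m}. real m * (2 * Q))"
    using cardJ closed_walks_nonneg by (intro sum_mono) (simp add: Q_def mult_right_mono)
  also have "\<dots> = 8 * real k ^ 2 * Q" by (simp add: m_def power2_eq_square)
  finally show ?thesis by (simp add: m_def Q_def)
qed

lemma has_rainbow_cycle_if_card_non_rainbow_less:
  assumes "card (non_rainbow_homs m) < card (cycle_homs m V E)"
  shows "has_rainbow_cycle V E c m"
proof -
  have "\<not> cycle_homs m V E \<subseteq> non_rainbow_homs m"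
  proof
    assume "cycle_homs m V E \<subseteq> non_rainbow_homs m"
    then have "card (cycle_homs m V E) \<le> card (non_rainbow_homs m)"
      by (intro card_mono) (simp_all add: non_rainbow_homs_def finite_cycle_homs)
    with assms show False by simp
  qed
  then obtain x where "x \<in> cycle_homs m V E" "x \<notin> non_rainbow_homs m" by blast
  then show ?thesis
    unfolding has_rainbow_cycle_def is_cycle_def non_rainbow_homs_def cycle_homs_def
    by (auto simp: PiE_iff)
qed

end

theorem lemma4p1:
  fixes V :: "'a set" and E :: "'a set set" and c :: "'a set \<Rightarrow> 'c" and k :: nat
  assumes "k \<ge> 2"
    and "simple_graph V E"
    and "proper_edge_colouring E c"
    and "real (hom_cycle (2 * k) V E) >
           64 ^ (2 * k) * real k ^ (3 * k) * real (card V) * real (max_degree V E) ^ k"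
  shows "has_rainbow_cycle V E c (2 * k)"
proof -
  interpret properly_edge_coloured V E c using assms(2,3) by unfold_locales
  define Q where "Q = real (max_degree V E) * closed_walks (k-1)"
  have hom: "real (card (cycle_homs (2*k) V E)) = closed_walks k"
    using assms(1) by (intro card_cycle_homs_eq_closed_walks) simp
  have "(64::real) ^ (2*k) * real k ^ (3*k) = (4096 * real k ^ 3) ^ k"
    by (simp add: power_mult_distrib power_mult)
  then have many: "closed_walks k > (4096 * real k ^ 3) ^ k * real (card V) * real (max_degree V E) ^ k"
    using assms(4) hom by (simp add: hom_cycle_def)
  have "0 \<le> (4096 * real k ^ 3) ^ k * real (card V) * real (max_degree V E) ^ k" by simp
  with many have pos: "closed_walks k > 0" by linarith
  have step: "4096 * real k ^ 3 * Q \<le> closed_walks k"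
    unfolding Q_def using assms(1) many by (intro closed_walks_step_bound) auto
  have "16 * real k ^ 2 * Q \<le> 4096 * real k ^ 3 * Q"
    using assms(1) closed_walks_nonneg
    by (intro mult_right_mono) (auto simp: Q_def power2_eq_square power3_eq_cube)
  with step pos have "8 * real k ^ 2 * Q < closed_walks k" by linarith
  then have "real (card (non_rainbow_homs (2*k))) < real (card (cycle_homs (2*k) V E))"
    using card_non_rainbow_homs_le[OF assms(1)] hom by (simp add: Q_def)
  then show ?thesis by (intro has_rainbow_cycle_if_card_non_rainbow_less) simp
qed

end
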